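(* For $n>4$, the network space $\mathfrak S_n$ has exactly $c=(n-1)!/2$ chambers, each a simplex of dimension $d=n(n-3)/2-1$; it has exactly $c(d+1)$ simplices of dimension $d-1$ (ridges), exactly $\delta$ vertices, and exactly $\binom{\delta}{2}$ edges, where $\delta=2^{n-1}-n-1$.
   Context: $X$ is a set of $n$ labels. A split of $X$ is an unordered partition of $X$ into two nonempty sets; it is trivial if one part is a singleton. A circular ordering of $X$ is a cyclic arrangement $\pi=(x_1,\dots,x_n)$ up to rotation and reflection; a split is circular w.r.t. $\pi$ if it has the form $\{\{x_{i+1},\dots,x_j\},X\setminus\{x_{i+1},\dots,x_j\}\}$ (indices mod $n$). Let $\delta=2^{n-1}-n-1$ be the number of nontrivial splits and give $\mathbb R^\delta$ coordinates indexed by them. For each circular ordering $\pi$, $O_\pi$ is the set of nonnegative vectors in $\mathbb R^\delta$ supported on splits circular w.r.t. $\pi$, and the chamber $\Delta_\pi=O_\pi\cap\{\sum_s x_s=1\}$. The network space is $\mathfrak S_n=\bigcup_\pi\Delta_\pi$, a simplicial complex whose simplices are the faces of the chambers (sets of points of a chamber with support contained in a given set of splits). *)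

theory Defs
  imports "HOL-Analysis.Analysis"
begin

text \<open>A split is represented as the two-element set {A, X - A}
  of its (nonempty) parts; points of R^delta are functions from splits to reals,
  which vanish outside the nontrivial splits.\<close>

definition nontriv_splits :: "nat \<Rightarrow> nat set set set" where
  "nontriv_splits n = {{A, {0..<n} - A} | A. A \<subseteq> {0..<n} \<and> 2 \<le> card A \<and> 2 \<le> card ({0..<n} - A)}"

text \<open>Circular orderings, given by listing the labels (rotations/reflections give the
  same set of circular splits, hence the same chamber).\<close>
definition orderings :: "nat \<Rightarrow> nat list set" where
  "orderings n = {p. distinct p \<and> set p = {0..<n}}"

definition circ_splits :: "nat \<Rightarrow> nat list \<Rightarrow> nat set set set" where
  "circ_splits n p = {{A, {0..<n} - A} | A. \<exists>r m. 0 < m \<and> m < n \<and> A = set (take m (rotate r p))}"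

definition delta :: "nat \<Rightarrow> nat" where
  "delta n = 2 ^ (n - 1) - n - 1"

definition chamber :: "nat \<Rightarrow> nat list \<Rightarrow> (nat set set \<Rightarrow> real) set" where
  "chamber n p = {x. (\<forall>s. 0 \<le> x s) \<and> (\<forall>s. x s \<noteq> 0 \<longrightarrow> s \<in> nontriv_splits n \<inter> circ_splits n p)
                    \<and> (\<Sum>s\<in>nontriv_splits n. x s) = 1}"

definition chambers :: "nat \<Rightarrow> (nat set set \<Rightarrow> real) set set" where
  "chambers n = chamber n ` orderings n"

definition simplices :: "nat \<Rightarrow> (nat set set \<Rightarrow> real) set set" where
  "simplices n = {{x \<in> chamber n p. \<forall>s. x s \<noteq> 0 \<longrightarrow> s \<in> T} | p T. p \<in> orderings n}"

definition aff_indep :: "('a \<Rightarrow> real) list \<Rightarrow> bool" where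
  "aff_indep ps \<longleftrightarrow> (\<forall>c :: nat \<Rightarrow> real.
      (\<Sum>i<length ps. c i) = 0 \<and> (\<forall>s. (\<Sum>i<length ps. c i * (ps ! i) s) = 0)
      \<longrightarrow> (\<forall>i<length ps. c i = 0))"

definition conv_hull_list :: "('a \<Rightarrow> real) list \<Rightarrow> ('a \<Rightarrow> real) set" where
  "conv_hull_list ps = {(\<lambda>s. \<Sum>i<length ps. w i * (ps ! i) s) | w.
      (\<forall>i<length ps. 0 \<le> w i) \<and> (\<Sum>i<length ps. w i) = 1}"

definition is_simplex :: "nat \<Rightarrow> ('a \<Rightarrow> real) set \<Rightarrow> bool" where
  "is_simplex k F \<longleftrightarrow> (\<exists>ps. length ps = k + 1 \<and> aff_indep ps \<and> F = conv_hull_list ps)"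

end

theory Submission
  imports Defs "HOL-Combinatorics.Multiset_Permutations"
begin

text \<open>The chamber of an ordering p is the standard simplex on the set S(p) of nontrivial splits
  circular for p, and each face of a chamber is the standard simplex on a subset of S(p). A
  standard simplex on a finite set U is a (|U| - 1)-simplex and determines U, so counting the
  k-simplices of the complex amounts to counting the (k + 1)-sets of splits lying in some S(p).

  S(p) has n(n - 3)/2 elements: each split in it is indexed by its part avoiding the first label
  of p, a block of consecutive positions. The two-element splits in S(p) are exactly the adjacent
  pairs of p, so S(p) determines p up to rotation and reflection, and there are (n - 1)!/2
  chambers. For n > 4, two chambers sharing all but one split coincide: all adjacencies of the
  first ordering but one are adjacencies of the second, and this forces the last one. Finally,
  any two splits are circular for a common ordering, so every set of at most two nontrivial
  splits spans a face.\<close>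

section \<open>Standard simplices\<close>

definition basis_fun :: "'a \<Rightarrow> 'a \<Rightarrow> real" where
  "basis_fun s = (\<lambda>t. if t = s then 1 else 0)"

definition std_simplex :: "'a set \<Rightarrow> ('a \<Rightarrow> real) set" where
  "std_simplex U = {x. (\<forall>s. 0 \<le> x s) \<and> (\<forall>s. x s \<noteq> 0 \<longrightarrow> s \<in> U) \<and> (\<Sum>s\<in>U. x s) = 1}"

lemma inj_basis_fun: "inj basis_fun"
  by (rule injI) (metis basis_fun_def zero_neq_one)

lemma basis_fun_in_std_simplex_iff: "finite U \<Longrightarrow> basis_fun s \<in> std_simplex U \<longleftrightarrow> s \<in> U"
  by (auto simp: std_simplex_def basis_fun_def split: if_splits)

lemma std_simplex_inject: "finite U \<Longrightarrow> finite V \<Longrightarrow> std_simplex U = std_simplex V \<longleftrightarrow> U = V"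
  by (metis basis_fun_in_std_simplex_iff subsetI subset_antisym)

lemma sum_mult_basis_fun:
  "finite U \<Longrightarrow> (\<Sum>u\<in>U. w u * basis_fun u t) = (if t \<in> U then w t else 0)"
  by (simp add: basis_fun_def of_bool_def[symmetric])

lemma std_simplex_eq_sum_basis_fun:
  "finite U \<Longrightarrow> x \<in> std_simplex U \<Longrightarrow> (\<Sum>u\<in>U. x u * basis_fun u t) = x t"
  by (auto simp: sum_mult_basis_fun std_simplex_def)

lemma sum_nth_distinct: "distinct xs \<Longrightarrow> (\<Sum>i<length xs. f (xs ! i)) = (\<Sum>x\<in>set xs. f x)"
  by (simp add: bij_betw_nth sum.reindex_bij_betw)

lemma sum_lessThan_delta_mult:
  "(\<Sum>i<(n::nat). (if i = j then 1 else 0) * f i) = (if j < n then f j else (0::real))"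
  by (simp add: of_bool_def[symmetric])

lemma nth_in_conv_hull_list:
  assumes "j < length ps"
  shows "ps ! j \<in> conv_hull_list ps"
proof -
  define w where "w i = (if i = j then 1 else 0 :: real)" for i
  have "ps ! j = (\<lambda>s. \<Sum>i<length ps. w i * (ps ! i) s)"
    using assms by (simp add: w_def sum_lessThan_delta_mult)
  moreover have "(\<forall>i<length ps. 0 \<le> w i) \<and> (\<Sum>i<length ps. w i) = 1"
    using assms by (simp add: w_def)
  ultimately show ?thesis
    unfolding conv_hull_list_def by blast
qed

lemma aff_indep_affine_coeff:
  assumes "aff_indep ps" "j < length ps" "(\<Sum>i<length ps. g i) = 1"
    and "\<And>t. (\<Sum>i<length ps. g i * (ps ! i) t) = (ps ! j) t"
  shows "g j = 1"
proof -
  define c where "c i = g i - (if i = j then 1 else 0)" for i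
  have "(\<Sum>i<length ps. c i) = 0"
    using assms(2,3) by (simp add: c_def sum_subtractf)
  moreover have "(\<Sum>i<length ps. c i * (ps ! i) s) = 0" for s
    using assms(2) assms(4)[of s]
    by (simp add: c_def left_diff_distrib sum_subtractf sum_lessThan_delta_mult)
  ultimately have "c j = 0"
    using assms(1,2) unfolding aff_indep_def by blast
  then show ?thesis
    by (simp add: c_def)
qed

lemma aff_indep_distinct:
  assumes "aff_indep ps"
  shows "distinct ps"
proof (rule ccontr)
  assume "\<not> distinct ps"
  then obtain i j where ij: "i < length ps" "j < length ps" "i \<noteq> j" "ps ! i = ps ! j"
    by (auto simp: distinct_conv_nth)
  have "(if j = i then 1 else 0 :: real) = 1"
    by (rule aff_indep_affine_coeff[OF assms ij(2)])
      (use ij in \<open>simp_all add: sum_lessThan_delta_mult\<close>)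
  then show False
    using ij(3) by simp
qed

lemma aff_indep_map_basis_fun:
  assumes "distinct us"
  shows "aff_indep (map basis_fun us)"
  unfolding aff_indep_def
proof (intro allI impI)
  fix c :: "nat \<Rightarrow> real" and j
  let ?ps = "map basis_fun us"
  assume c: "(\<Sum>i<length ?ps. c i) = 0 \<and> (\<forall>s. (\<Sum>i<length ?ps. c i * (?ps ! i) s) = 0)"
    and j: "j < length ?ps"
  have "(?ps ! i) (us ! j) = (if i = j then 1 else 0)" if "i < length ?ps" for i
    using that j assms by (auto simp: basis_fun_def nth_eq_iff_index_eq)
  then have "(\<Sum>i<length ?ps. c i * (?ps ! i) (us ! j)) = c j"
    using j by (simp add: mult.commute[of "c _"] sum_lessThan_delta_mult)
  then show "c j = 0"
    using c by simp
qed

lemma conv_hull_list_map_basis_fun: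
  assumes us: "distinct us"
  shows "conv_hull_list (map basis_fun us) = std_simplex (set us)"
proof (intro equalityI subsetI)
  fix x
  assume "x \<in> conv_hull_list (map basis_fun us)"
  then obtain w where x: "x = (\<lambda>t. \<Sum>i<length us. w i * basis_fun (us ! i) t)"
    and w: "\<forall>i<length us. 0 \<le> w i" "(\<Sum>i<length us. w i) = 1"
    unfolding conv_hull_list_def by auto
  define w' where "w' u = w (THE i. i < length us \<and> us ! i = u)" for u
  have w': "w' (us ! i) = w i" if "i < length us" for i
    using that us by (auto simp: w'_def nth_eq_iff_index_eq intro!: arg_cong[where f = w] the_equality)
  have "x t = (\<Sum>u\<in>set us. w' u * basis_fun u t)" for t
    using sum_nth_distinct[OF us, of "\<lambda>u. w' u * basis_fun u t"] w' by (simp add: x)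
  then have "x t = (if t \<in> set us then w' t else 0)" for t
    by (simp add: sum_mult_basis_fun)
  moreover have "(\<Sum>u\<in>set us. w' u) = 1"
    using sum_nth_distinct[OF us, of w'] w(2) w' by simp
  moreover have "0 \<le> w' u" if "u \<in> set us" for u
    using that w(1) w' by (auto simp: in_set_conv_nth)
  ultimately show "x \<in> std_simplex (set us)"
    by (auto simp: std_simplex_def)
next
  fix x
  assume x: "x \<in> std_simplex (set us)"
  define w where "w i = x (us ! i)" for i
  have "x t = (\<Sum>i<length us. w i * basis_fun (us ! i) t)" for t
    using std_simplex_eq_sum_basis_fun[OF finite_set x, of t]
      sum_nth_distinct[OF us, of "\<lambda>u. x u * basis_fun u t"]
    by (simp add: w_def)
  moreover have "(\<forall>i<length us. 0 \<le> w i) \<and> (\<Sum>i<length us. w i) = 1"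
    using x sum_nth_distinct[OF us, of x] by (simp add: std_simplex_def w_def)
  ultimately show "x \<in> conv_hull_list (map basis_fun us)"
    unfolding conv_hull_list_def by auto
qed

lemma is_simplex_std_simplex:
  assumes "finite U" "card U = Suc k"
  shows "is_simplex k (std_simplex U)"
proof -
  obtain us where us: "distinct us" "set us = U"
    using assms(1) finite_distinct_list by blast
  then have "length (map basis_fun us) = k + 1"
    using assms(2) distinct_card by fastforce
  then show ?thesis
    unfolding is_simplex_def
    using aff_indep_map_basis_fun[OF us(1)] conv_hull_list_map_basis_fun[OF us(1)] us(2) by metis
qed

lemma basis_fun_in_vertices:
  assumes "finite U" "s \<in> U" "conv_hull_list ps = std_simplex U"
  shows "basis_fun s \<in> set ps"
proof -
  have "basis_fun s \<in> conv_hull_list ps"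
    using assms by (simp add: basis_fun_in_std_simplex_iff)
  then obtain w where es: "basis_fun s = (\<lambda>t. \<Sum>i<length ps. w i * (ps ! i) t)"
    and w: "\<forall>i<length ps. 0 \<le> w i" "(\<Sum>i<length ps. w i) = 1"
    unfolding conv_hull_list_def by blast
  have "\<exists>j<length ps. w j > 0"
  proof (rule ccontr)
    assume "\<not> (\<exists>j<length ps. w j > 0)"
    then have "\<forall>j<length ps. w j = 0"
      using w(1) by force
    then show False
      using w(2) by simp
  qed
  then obtain j where j: "j < length ps" "w j > 0"
    by blast
  have vertex: "ps ! i \<in> std_simplex U" if "i < length ps" for i
    using assms(3) nth_in_conv_hull_list[OF that] by simp
  have zero_off: "(ps ! j) t = 0" if "t \<noteq> s" for t
  proof -
    have "(\<Sum>i<length ps. w i * (ps ! i) t) = 0"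
      using fun_cong[OF es, of t] that by (simp add: basis_fun_def)
    moreover have "\<forall>i<length ps. 0 \<le> w i * (ps ! i) t"
      using w(1) vertex by (simp add: std_simplex_def)
    ultimately have "w j * (ps ! j) t = 0"
      using j(1) sum_nonneg_eq_0_iff[of "{..<length ps}" "\<lambda>i. w i * (ps ! i) t"] by simp
    then show ?thesis
      using j(2) by simp
  qed
  moreover have "(ps ! j) s = 1"
  proof -
    have "(\<Sum>t\<in>U. (ps ! j) t) = 1"
      using vertex[OF j(1)] by (simp add: std_simplex_def)
    moreover have "(\<Sum>t\<in>U. (ps ! j) t) = (\<Sum>t\<in>U. if t = s then (ps ! j) s else 0)"
      using zero_off by (intro sum.cong) auto
    ultimately show ?thesis
      using assms(1,2) by simp
  qed
  with zero_off have "ps ! j = basis_fun s"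
    by (auto simp: basis_fun_def)
  then show ?thesis
    using j(1) nth_mem by metis
qed

text \<open>A vertex that is not a basis function would have a second representation as an affine
  combination of the list, namely its expansion in the basis functions, which all occur in it.\<close>
lemma vertices_are_basis_funs:
  assumes ai: "aff_indep ps" and U: "finite U" and conv: "conv_hull_list ps = std_simplex U"
    and j: "j < length ps"
  shows "ps ! j \<in> basis_fun ` U"
proof (rule ccontr)
  assume not_basis: "ps ! j \<notin> basis_fun ` U"
  have "\<forall>s\<in>U. \<exists>i<length ps. ps ! i = basis_fun s"
    using basis_fun_in_vertices[OF U _ conv] by (simp add: in_set_conv_nth)
  then obtain k where k: "\<And>s. s \<in> U \<Longrightarrow> k s < length ps \<and> ps ! k s = basis_fun s"
    by metis
  define p where "p = ps ! j"
  have p: "p \<in> std_simplex U"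
    using conv nth_in_conv_hull_list[OF j] by (simp add: p_def)
  define g where "g i = (\<Sum>s\<in>U. if k s = i then p s else 0)" for i
  have "(\<Sum>i<length ps. g i) = (\<Sum>s\<in>U. \<Sum>i<length ps. if k s = i then p s else 0)"
    unfolding g_def by (rule sum.swap)
  also have "\<dots> = (\<Sum>s\<in>U. p s)"
    using k by (intro sum.cong) auto
  finally have g1: "(\<Sum>i<length ps. g i) = 1"
    using p by (simp add: std_simplex_def)
  have "(\<Sum>i<length ps. g i * (ps ! i) t) = (ps ! j) t" for t
  proof -
    have "(\<Sum>i<length ps. g i * (ps ! i) t)
        = (\<Sum>s\<in>U. \<Sum>i<length ps. if k s = i then p s * (ps ! i) t else 0)"
      unfolding g_def sum_distrib_right by (subst sum.swap) (auto intro!: sum.cong)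
    also have "\<dots> = (\<Sum>s\<in>U. p s * basis_fun s t)"
      using k by (intro sum.cong) auto
    also have "\<dots> = (ps ! j) t"
      using std_simplex_eq_sum_basis_fun[OF U p] by (simp add: p_def)
    finally show ?thesis .
  qed
  then have "g j = 1"
    using aff_indep_affine_coeff[OF ai j g1] by blast
  moreover have "g j = 0"
    using k not_basis unfolding g_def by (intro sum.neutral) (metis image_eqI)
  ultimately show False
    by simp
qed

lemma card_eq_if_is_simplex_std_simplex:
  assumes "finite U" "is_simplex k (std_simplex U)"
  shows "card U = Suc k"
proof -
  obtain ps where ps: "length ps = k + 1" "aff_indep ps" "std_simplex U = conv_hull_list ps"
    using assms(2) unfolding is_simplex_def by blast
  have "set ps = basis_fun ` U"
    using basis_fun_in_vertices[OF assms(1) _ ps(3)[symmetric]]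
      vertices_are_basis_funs[OF ps(2) assms(1) ps(3)[symmetric]]
    by (auto simp: in_set_conv_nth)
  then have "card U = card (set ps)"
    using card_image inj_basis_fun by (metis inj_on_subset subset_UNIV)
  also have "\<dots> = k + 1"
    using aff_indep_distinct[OF ps(2)] ps(1) distinct_card by metis
  finally show ?thesis
    by simp
qed

lemma is_simplex_std_simplex_iff:
  "finite U \<Longrightarrow> is_simplex k (std_simplex U) \<longleftrightarrow> card U = Suc k"
  using is_simplex_std_simplex card_eq_if_is_simplex_std_simplex by blast

section \<open>Circular orderings and their arcs\<close>

lemma orderings_length: "p \<in> orderings n \<Longrightarrow> length p = n"
  using distinct_card[of p] by (simp add: orderings_def)

lemma orderings_set: "p \<in> orderings n \<Longrightarrow> set p = {0..<n}"
  by (simp add: orderings_def)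

lemma orderings_distinct: "p \<in> orderings n \<Longrightarrow> distinct p"
  by (simp add: orderings_def)

lemma orderings_nth_less: "p \<in> orderings n \<Longrightarrow> i < n \<Longrightarrow> p ! i < n"
  using nth_mem[of i p] by (simp add: orderings_length orderings_set)

lemma orderings_nth_eq_iff: "p \<in> orderings n \<Longrightarrow> i < n \<Longrightarrow> j < n \<Longrightarrow> p ! i = p ! j \<longleftrightarrow> i = j"
  by (simp add: orderings_distinct orderings_length nth_eq_iff_index_eq)

lemma orderings_nth_surj: "p \<in> orderings n \<Longrightarrow> a < n \<Longrightarrow> \<exists>i<n. p ! i = a"
  using in_set_conv_nth[of a p] by (simp add: orderings_set orderings_length)

lemma rotate_orderings: "p \<in> orderings n \<Longrightarrow> rotate k p \<in> orderings n"
  by (simp add: orderings_def)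

lemma rev_orderings: "p \<in> orderings n \<Longrightarrow> rev p \<in> orderings n"
  by (simp add: orderings_def)

lemma card_arc: "p \<in> orderings n \<Longrightarrow> m \<le> n \<Longrightarrow> card (set (take m (rotate r p))) = m"
  by (simp add: orderings_distinct orderings_length distinct_card)

lemma arc_subset: "p \<in> orderings n \<Longrightarrow> set (take m (rotate r p)) \<subseteq> {0..<n}"
  using set_take_subset[of m "rotate r p"] by (simp add: orderings_set)

lemma set_drop_distinct: "distinct ys \<Longrightarrow> set (drop m ys) = set ys - set (take m ys)"
proof -
  assume d: "distinct ys"
  have "set (take m ys) \<inter> set (drop m ys) = {}"
    using set_take_disj_set_drop_if_distinct[OF d, of m m] by simp
  moreover have "set ys = set (take m ys) \<union> set (drop m ys)"
    by (metis append_take_drop_id set_append)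
  ultimately show ?thesis
    by blast
qed

lemma compl_arc:
  assumes p: "p \<in> orderings n" and m: "m \<le> n"
  shows "{0..<n} - set (take m (rotate r p)) = set (take (n - m) (rotate (r + m) p))"
proof -
  define ys where "ys = rotate r p"
  have ys: "length ys = n" "distinct ys" "set ys = {0..<n}"
    using p by (simp_all add: ys_def orderings_length orderings_distinct orderings_set)
  have "take (n - m) (rotate m ys) = drop m ys"
    using m ys(1) by (cases "m = n") (simp_all add: rotate_drop_take)
  then show ?thesis
    using set_drop_distinct[OF ys(2), of m] ys(3) by (simp add: ys_def rotate_rotate add.commute)
qed

definition cyc_succ :: "nat \<Rightarrow> nat \<Rightarrow> nat" where
  "cyc_succ n i = (if Suc i = n then 0 else Suc i)"

definition cyc_pred :: "nat \<Rightarrow> nat \<Rightarrow> nat" where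
  "cyc_pred n i = (if i = 0 then n - 1 else i - 1)"

lemma cyc_succ_less: "i < n \<Longrightarrow> cyc_succ n i < n"
  by (auto simp: cyc_succ_def)

lemma cyc_pred_less: "i < n \<Longrightarrow> cyc_pred n i < n"
  by (auto simp: cyc_pred_def)

lemma cyc_succ_pred: "i < n \<Longrightarrow> cyc_succ n (cyc_pred n i) = i"
  by (auto simp: cyc_succ_def cyc_pred_def)

lemma cyc_succ_eq_iff: "i < n \<Longrightarrow> j < n \<Longrightarrow> i = cyc_succ n j \<longleftrightarrow> j = cyc_pred n i"
  by (auto simp: cyc_succ_def cyc_pred_def)

lemma cyc_succ_neq: "i < n \<Longrightarrow> 2 \<le> n \<Longrightarrow> cyc_succ n i \<noteq> i"
  by (auto simp: cyc_succ_def)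

lemma cyc_pred_neq: "i < n \<Longrightarrow> 2 \<le> n \<Longrightarrow> cyc_pred n i \<noteq> i"
  by (auto simp: cyc_pred_def)

lemma cyc_succ_neq_pred: "i < n \<Longrightarrow> 3 \<le> n \<Longrightarrow> cyc_succ n i \<noteq> cyc_pred n i"
  by (auto simp: cyc_succ_def cyc_pred_def)

lemma cyc_succ_succ_neq: "i < n \<Longrightarrow> 3 \<le> n \<Longrightarrow> cyc_succ n (cyc_succ n i) \<noteq> i"
  by (auto simp: cyc_succ_def)

lemma Suc_mod_eq_cyc_succ: "i < n \<Longrightarrow> Suc i mod n = cyc_succ n i"
  by (auto simp: cyc_succ_def)

lemma take2_rotate:
  assumes p: "p \<in> orderings n" and n: "2 \<le> n"
  shows "set (take 2 (rotate r p)) = {p ! (r mod n), p ! cyc_succ n (r mod n)}"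
proof -
  have len: "length (rotate r p) = n"
    using p by (simp add: orderings_length)
  then have "take 2 (rotate r p) = [rotate r p ! 0, rotate r p ! 1]"
    using n by (cases "rotate r p"; cases "tl (rotate r p)") (auto simp: numeral_2_eq_2)
  moreover have "(1 + r) mod n = cyc_succ n (r mod n)"
    using n Suc_mod_eq_cyc_succ[of "r mod n" n] by (simp add: mod_Suc_eq)
  ultimately show ?thesis
    using n p by (simp add: nth_rotate orderings_length)
qed

section \<open>Splits\<close>

definition split_of :: "nat \<Rightarrow> nat set \<Rightarrow> nat set set" where
  "split_of n A = {A, {0..<n} - A}"

definition chamber_splits :: "nat \<Rightarrow> nat list \<Rightarrow> nat set set set" where
  "chamber_splits n p = nontriv_splits n \<inter> circ_splits n p"

lemma split_of_in_nontriv_splits: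
  "A \<subseteq> {0..<n} \<Longrightarrow> 2 \<le> card A \<Longrightarrow> 2 \<le> card ({0..<n} - A) \<Longrightarrow> split_of n A \<in> nontriv_splits n"
  unfolding nontriv_splits_def split_of_def by blast

lemma split_of_arc_in_circ_splits:
  "0 < m \<Longrightarrow> m < n \<Longrightarrow> split_of n (set (take m (rotate r p))) \<in> circ_splits n p"
  unfolding circ_splits_def split_of_def by blast

lemma circ_splitsE:
  assumes "s \<in> circ_splits n p"
  obtains r m where "0 < m" "m < n" "s = split_of n (set (take m (rotate r p)))"
  using assms unfolding circ_splits_def split_of_def by blast

lemma split_of_compl: "A \<subseteq> {0..<n} \<Longrightarrow> split_of n ({0..<n} - A) = split_of n A"
  by (auto simp: split_of_def double_diff)

lemma split_of_eq_cases: "split_of n A = split_of n B \<Longrightarrow> A = B \<or> A = {0..<n} - B"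
  unfolding split_of_def by (auto simp: doubleton_eq_iff)

lemma split_of_eq_imp_eq:
  "split_of n A = split_of n B \<Longrightarrow> a < n \<Longrightarrow> a \<notin> A \<Longrightarrow> a \<notin> B \<Longrightarrow> A = B"
  using split_of_eq_cases[of n A B] by auto

lemma finite_nontriv_splits: "finite (nontriv_splits n)"
proof -
  have "nontriv_splits n \<subseteq> split_of n ` Pow {0..<n}"
    unfolding nontriv_splits_def split_of_def by auto
  then show ?thesis
    by (rule finite_subset) simp
qed

lemma finite_chamber_splits: "finite (chamber_splits n p)"
  by (simp add: chamber_splits_def finite_nontriv_splits)

lemma card_subsets_strictly_between:
  assumes Y: "finite Y" "2 \<le> card Y"
  shows "card {A. A \<subseteq> Y \<and> 2 \<le> card A \<and> card A < card Y} = 2 ^ card Y - card Y - 2"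
proof -
  define R where "R = insert {} (insert Y ((\<lambda>y. {y}) ` Y))"
  have "{A. A \<subseteq> Y \<and> 2 \<le> card A \<and> card A < card Y} = Pow Y - R"
  proof (intro equalityI subsetI)
    fix A
    assume "A \<in> {A. A \<subseteq> Y \<and> 2 \<le> card A \<and> card A < card Y}"
    then show "A \<in> Pow Y - R"
      by (auto simp: R_def)
  next
    fix A
    assume A: "A \<in> Pow Y - R"
    then have "finite A" "A \<subseteq> Y"
      using Y(1) finite_subset by auto
    moreover have "2 \<le> card A"
    proof -
      have "card A \<noteq> 0" "card A \<noteq> 1"
        using A calculation by (auto simp: R_def card_1_singleton_iff)
      then show ?thesis
        by linarith
    qed
    moreover have "card A < card Y"
      using A Y(1) calculation by (intro psubset_card_mono) (auto simp: R_def)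
    ultimately show "A \<in> {A. A \<subseteq> Y \<and> 2 \<le> card A \<and> card A < card Y}"
      by simp
  qed
  moreover have "card R = card Y + 2"
  proof -
    have "Y \<notin> (\<lambda>y. {y}) ` Y"
      using Y(2) by auto
    moreover have "card ((\<lambda>y. {y}) ` Y) = card Y"
      by (simp add: card_image)
    moreover have "{} \<notin> insert Y ((\<lambda>y. {y}) ` Y)"
      using Y(2) by auto
    ultimately show ?thesis
      using Y(1) by (simp add: R_def card_insert_disjoint)
  qed
  moreover have "R \<subseteq> Pow Y"
    by (auto simp: R_def)
  ultimately show ?thesis
    using Y(1) by (simp add: card_Diff_subset finite_subset card_Pow)
qed

lemma nontriv_splits_eq_image:
  "nontriv_splits n = split_of n ` {A. A \<subseteq> {1..<n} \<and> 2 \<le> card A \<and> card A < n - 1}"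
proof (intro equalityI subsetI)
  fix s
  assume "s \<in> nontriv_splits n"
  then obtain A where A: "s = split_of n A" "A \<subseteq> {0..<n}" "2 \<le> card A" "2 \<le> card ({0..<n} - A)"
    unfolding nontriv_splits_def split_of_def by blast
  obtain B where B: "s = split_of n B" "B \<subseteq> {0..<n}" "0 \<notin> B" "2 \<le> card B" "2 \<le> card ({0..<n} - B)"
  proof (cases "0 \<in> A")
    case True
    have "{0..<n} - ({0..<n} - A) = A"
      using A(2) by auto
    then show ?thesis
      using that[of "{0..<n} - A"] A True split_of_compl[OF A(2)] by auto
  qed (use A that in blast)
  have "B \<subseteq> {0..<n} - {0}"
    using B(2,3) by blast
  also have "\<dots> = {1..<n}"
    by auto
  finally have "B \<subseteq> {1..<n}" .
  moreover have "card ({0..<n} - B) = n - card B"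
    using B(2) by (simp add: card_Diff_subset finite_subset)
  ultimately show "s \<in> split_of n ` {A. A \<subseteq> {1..<n} \<and> 2 \<le> card A \<and> card A < n - 1}"
    using B(1,4,5) by auto
next
  fix s
  assume "s \<in> split_of n ` {A. A \<subseteq> {1..<n} \<and> 2 \<le> card A \<and> card A < n - 1}"
  then obtain A where A: "s = split_of n A" "A \<subseteq> {1..<n}" "2 \<le> card A" "card A < n - 1"
    by auto
  moreover have "{1..<n} \<subseteq> {0..<n}"
    by auto
  ultimately have "A \<subseteq> {0..<n}"
    by blast
  moreover have "card ({0..<n} - A) = n - card A"
    using calculation by (simp add: card_Diff_subset finite_subset)
  ultimately show "s \<in> nontriv_splits n"
    using A by (simp add: split_of_in_nontriv_splits)
qed

lemma inj_on_split_of_Pow: "0 < n \<Longrightarrow> inj_on (split_of n) (Pow {1..<n})"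
proof (rule inj_onI)
  fix A B
  assume "0 < n" "A \<in> Pow {1..<n}" "B \<in> Pow {1..<n}" "split_of n A = split_of n B"
  moreover have "0 \<notin> A" "0 \<notin> B"
    using calculation by auto
  ultimately show "A = B"
    using split_of_eq_imp_eq[of n A B 0] by simp
qed

lemma card_nontriv_splits:
  assumes n: "3 \<le> n"
  shows "card (nontriv_splits n) = delta n"
proof -
  define Q where "Q = {A. A \<subseteq> {1..<n} \<and> 2 \<le> card A \<and> card A < n - 1}"
  have "inj_on (split_of n) Q"
    using n by (intro inj_on_subset[OF inj_on_split_of_Pow]) (auto simp: Q_def)
  then have "card (nontriv_splits n) = card Q"
    unfolding nontriv_splits_eq_image Q_def[symmetric] by (rule card_image)
  also have "\<dots> = 2 ^ (n - 1) - (n - 1) - 2"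
  proof -
    have "2 \<le> card {1..<n}"
      using n by simp
    from card_subsets_strictly_between[OF finite_atLeastLessThan this] show ?thesis
      unfolding Q_def by (simp only: card_atLeastLessThan)
  qed
  also have "\<dots> = delta n"
    using n by (simp add: delta_def)
  finally show ?thesis .
qed

section \<open>Rotation and reflection of orderings\<close>

lemma rotate_rotate_back:
  assumes "length p = n" "0 < n"
  shows "rotate (n - k mod n) (rotate k p) = p"
proof -
  have "(n - k mod n + k) mod n = (n - k mod n + k mod n) mod n"
    by (simp add: mod_add_right_eq)
  also have "\<dots> = 0"
    using assms(2) by (simp add: less_imp_le)
  finally show ?thesis
    using assms(1) rotate_conv_mod[of "n - k mod n + k" p] by (simp add: rotate_rotate)
qed

lemma circ_splits_rotate_subset: "circ_splits n (rotate k p) \<subseteq> circ_splits n p"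
  unfolding circ_splits_def by (auto simp: rotate_rotate)

lemma circ_splits_rotate:
  assumes "p \<in> orderings n" "0 < n"
  shows "circ_splits n (rotate k p) = circ_splits n p"
  using circ_splits_rotate_subset[of n "n - k mod n" "rotate k p"] circ_splits_rotate_subset[of n k p]
    rotate_rotate_back[OF orderings_length[OF assms(1)] assms(2)]
  by simp

lemma circ_splits_rev_subset:
  assumes p: "p \<in> orderings n"
  shows "circ_splits n (rev p) \<subseteq> circ_splits n p"
proof
  fix s
  assume "s \<in> circ_splits n (rev p)"
  then obtain r m where m: "0 < m" "m < n" and A: "s = split_of n (set (take m (rotate r (rev p))))"
    by (rule circ_splitsE)
  define ys where "ys = rotate (n - r mod n) p"
  have ys: "length ys = n" "distinct ys" "set ys = {0..<n}"
    using p by (simp_all add: ys_def orderings_length orderings_distinct orderings_set)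
  have "rotate r (rev p) = rev ys"
    using p by (simp add: rotate_rev ys_def orderings_length)
  then have "set (take m (rotate r (rev p))) = set (drop (n - m) ys)"
    using ys(1) by (simp add: take_rev)
  then have "set (take m (rotate r (rev p))) = {0..<n} - set (take (n - m) ys)"
    using set_drop_distinct[OF ys(2)] ys(3) by simp
  then have "s = split_of n (set (take (n - m) (rotate (n - r mod n) p)))"
    using A split_of_compl[of "set (take (n - m) ys)" n] set_take_subset[of "n - m" ys] ys(3)
    by (simp add: ys_def)
  then show "s \<in> circ_splits n p"
    using m split_of_arc_in_circ_splits[of "n - m" n] by simp
qed

lemma circ_splits_rev: "p \<in> orderings n \<Longrightarrow> circ_splits n (rev p) = circ_splits n p"
  using circ_splits_rev_subset[of p n] circ_splits_rev_subset[of "rev p" n] rev_orderings[of p n]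
  by auto

lemma chamber_splits_rotate: "p \<in> orderings n \<Longrightarrow> 0 < n \<Longrightarrow> chamber_splits n (rotate k p) = chamber_splits n p"
  by (simp add: chamber_splits_def circ_splits_rotate)

lemma chamber_splits_rev: "p \<in> orderings n \<Longrightarrow> chamber_splits n (rev p) = chamber_splits n p"
  by (simp add: chamber_splits_def circ_splits_rev)

section \<open>Cyclic adjacency\<close>

definition cyc_adj :: "nat \<Rightarrow> nat list \<Rightarrow> nat \<Rightarrow> nat \<Rightarrow> bool" where
  "cyc_adj n p a b \<longleftrightarrow> (\<exists>i<n. {a, b} = {p ! i, p ! cyc_succ n i})"

lemma cyc_adj_sym: "cyc_adj n p a b \<Longrightarrow> cyc_adj n p b a"
  unfolding cyc_adj_def by (metis insert_commute)

lemma cyc_adj_less: "p \<in> orderings n \<Longrightarrow> cyc_adj n p a b \<Longrightarrow> a < n \<and> b < n"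
  unfolding cyc_adj_def using orderings_nth_less cyc_succ_less by (metis doubleton_eq_iff)

lemma cyc_adj_neq: "p \<in> orderings n \<Longrightarrow> 2 \<le> n \<Longrightarrow> cyc_adj n p a b \<Longrightarrow> a \<noteq> b"
  unfolding cyc_adj_def
  by (metis cyc_succ_less cyc_succ_neq doubleton_eq_iff orderings_nth_eq_iff)

text \<open>The split system of a chamber thus determines the cyclic adjacency of its ordering.\<close>
lemma pair_split_in_chamber_splits_iff:
  assumes p: "p \<in> orderings n" and n: "4 \<le> n"
  shows "a \<noteq> b \<and> split_of n {a, b} \<in> chamber_splits n p \<longleftrightarrow> cyc_adj n p a b"
proof
  assume "cyc_adj n p a b"
  then obtain i where i: "i < n" "{a, b} = {p ! i, p ! cyc_succ n i}"
    unfolding cyc_adj_def by blast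
  have ab: "{a, b} = set (take 2 (rotate i p))"
    using take2_rotate[OF p, of i] n i by simp
  have card_ab: "card {a, b} = 2"
    using ab card_arc[OF p, of 2 i] n by simp
  have sub: "{a, b} \<subseteq> {0..<n}"
    using ab arc_subset[OF p] by simp
  have "card ({0..<n} - {a, b}) = n - 2"
    using sub card_ab by (simp add: card_Diff_subset)
  then have "split_of n {a, b} \<in> nontriv_splits n"
    using split_of_in_nontriv_splits[OF sub] card_ab n by simp
  moreover have "split_of n {a, b} \<in> circ_splits n p"
    using split_of_arc_in_circ_splits[of 2 n i p] ab n by simp
  moreover have "a \<noteq> b"
    using card_ab by auto
  ultimately show "a \<noteq> b \<and> split_of n {a, b} \<in> chamber_splits n p"
    by (simp add: chamber_splits_def)
next
  assume "a \<noteq> b \<and> split_of n {a, b} \<in> chamber_splits n p"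
  then have ab: "a \<noteq> b" and circ: "split_of n {a, b} \<in> circ_splits n p"
    by (auto simp: chamber_splits_def)
  from circ obtain r m where m: "0 < m" "m < n"
    and A: "split_of n {a, b} = split_of n (set (take m (rotate r p)))"
    by (rule circ_splitsE)
  have "{a, b} = set (take m (rotate r p)) \<or> {a, b} = set (take (n - m) (rotate (r + m) p))"
    using split_of_eq_cases[OF A] compl_arc[OF p, of m r] m by simp
  then obtain r' m' where rm: "m' \<le> n" "{a, b} = set (take m' (rotate r' p))"
    using m by (metis diff_le_self less_imp_le)
  have "m' = card {a, b}"
    using card_arc[OF p rm(1), of r'] rm(2) by simp
  then have "m' = 2"
    using ab by simp
  then have "{a, b} = {p ! (r' mod n), p ! cyc_succ n (r' mod n)}"
    using rm take2_rotate[OF p, of r'] n by simp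
  moreover have "r' mod n < n"
    using n by simp
  ultimately show "cyc_adj n p a b"
    unfolding cyc_adj_def by blast
qed

lemma cyc_adj_nbrs:
  assumes p: "p \<in> orderings n" and i: "i < n"
  shows "{b. cyc_adj n p (p ! i) b} = {p ! cyc_succ n i, p ! cyc_pred n i}"
proof (intro set_eqI iffI)
  fix b
  assume "b \<in> {b. cyc_adj n p (p ! i) b}"
  then obtain j where j: "j < n" "{p ! i, b} = {p ! j, p ! cyc_succ n j}"
    unfolding cyc_adj_def by blast
  then consider "p ! i = p ! j" "b = p ! cyc_succ n j" | "p ! i = p ! cyc_succ n j" "b = p ! j"
    by (auto simp: doubleton_eq_iff)
  then show "b \<in> {p ! cyc_succ n i, p ! cyc_pred n i}"
  proof cases
    case 1
    then show ?thesis
      using orderings_nth_eq_iff[OF p i j(1)] by simp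
  next
    case 2
    then have "j = cyc_pred n i"
      using orderings_nth_eq_iff[OF p i cyc_succ_less[OF j(1)]] cyc_succ_eq_iff[OF i j(1)] by simp
    then show ?thesis
      using 2 by simp
  qed
next
  fix b
  assume "b \<in> {p ! cyc_succ n i, p ! cyc_pred n i}"
  moreover have "{p ! i, p ! cyc_pred n i} = {p ! cyc_pred n i, p ! cyc_succ n (cyc_pred n i)}"
    using cyc_succ_pred[OF i] by auto
  ultimately show "b \<in> {b. cyc_adj n p (p ! i) b}"
    using i cyc_pred_less[OF i] unfolding cyc_adj_def by blast
qed

lemma card_cyc_adj_nbrs:
  assumes p: "p \<in> orderings n" and n: "3 \<le> n" and a: "a < n"
  shows "finite {b. cyc_adj n p a b}" "card {b. cyc_adj n p a b} = 2"
proof -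
  obtain i where i: "i < n" "p ! i = a"
    using orderings_nth_surj[OF p a] by blast
  have "p ! cyc_succ n i \<noteq> p ! cyc_pred n i"
    using orderings_nth_eq_iff[OF p cyc_succ_less[OF i(1)] cyc_pred_less[OF i(1)]]
      cyc_succ_neq_pred[OF i(1) n] by simp
  then show "finite {b. cyc_adj n p a b}" "card {b. cyc_adj n p a b} = 2"
    using cyc_adj_nbrs[OF p i(1)] i(2) by simp_all
qed

lemma cyc_adj_nbrs_eq_if_subset:
  assumes "p \<in> orderings n" "q \<in> orderings n" "3 \<le> n" "x < n"
    and "{b. cyc_adj n p x b} \<subseteq> {b. cyc_adj n q x b}"
  shows "{b. cyc_adj n p x b} = {b. cyc_adj n q x b}"
  using assms card_cyc_adj_nbrs by (metis card_subset_eq)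

context
  fixes n p q i0
  assumes p: "p \<in> orderings n" and q: "q \<in> orderings n" and n: "3 \<le> n"
    and edges: "\<And>i. i < n \<Longrightarrow> i \<noteq> i0 \<Longrightarrow> cyc_adj n q (p ! i) (p ! cyc_succ n i)"
begin

lemma cyc_adj_nbrs_eq_away_from_missing_edge:
  assumes l: "l < n" "l \<noteq> i0" "l \<noteq> cyc_succ n i0"
  shows "{b. cyc_adj n p (p ! l) b} = {b. cyc_adj n q (p ! l) b}"
proof (rule cyc_adj_nbrs_eq_if_subset[OF p q n])
  show "p ! l < n"
    using orderings_nth_less[OF p l(1)] .
  have "cyc_pred n l \<noteq> i0"
    using l cyc_succ_pred[OF l(1)] by metis
  then have "cyc_adj n q (p ! l) (p ! cyc_pred n l)"
    using edges[OF cyc_pred_less[OF l(1)]] cyc_succ_pred[OF l(1)] cyc_adj_sym by metis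
  then show "{b. cyc_adj n p (p ! l) b} \<subseteq> {b. cyc_adj n q (p ! l) b}"
    using edges[OF l(1,2)] cyc_adj_nbrs[OF p l(1)] by auto
qed

text \<open>The missing edge is forced: the second neighbour of its endpoint u in q cannot be an
  interior vertex of the path formed by the other edges, whose neighbours are already known.\<close>
lemma missing_edge_in_cyc_adj:
  assumes i0: "i0 < n"
  shows "cyc_adj n q (p ! i0) (p ! cyc_succ n i0)"
proof -
  define u w u' where "u = p ! i0" and "w = p ! cyc_succ n i0" and "u' = p ! cyc_pred n i0"
  have "cyc_adj n q (p ! cyc_pred n i0) (p ! cyc_succ n (cyc_pred n i0))"
    using edges[OF cyc_pred_less[OF i0] cyc_pred_neq[OF i0]] n by simp
  then have uu': "cyc_adj n q u u'"
    using cyc_succ_pred[OF i0] cyc_adj_sym unfolding u_def u'_def by metis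
  have "card ({b. cyc_adj n q u b} - {u'}) = 1"
    using card_cyc_adj_nbrs[OF q n] orderings_nth_less[OF p i0] uu' by (simp add: u_def)
  then obtain x where "{b. cyc_adj n q u b} - {u'} = {x}"
    by (auto simp: card_1_singleton_iff)
  then have ux: "cyc_adj n q u x" and x: "x \<noteq> u'"
    by auto
  obtain l where l: "l < n" "p ! l = x"
    using orderings_nth_surj[OF p] cyc_adj_less[OF q ux] by blast
  have "x = w"
  proof (rule ccontr)
    assume "x \<noteq> w"
    then have l_succ: "l \<noteq> cyc_succ n i0"
      using l w_def by blast
    have "l \<noteq> i0"
      using cyc_adj_neq[OF q _ ux] n l u_def by auto
    then have "u \<in> {b. cyc_adj n p x b}"
      using cyc_adj_nbrs_eq_away_from_missing_edge[OF l(1) _ l_succ] l(2) cyc_adj_sym[OF ux] by auto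
    then consider "u = p ! cyc_succ n l" | "u = p ! cyc_pred n l"
      using cyc_adj_nbrs[OF p l(1)] l(2) by auto
    then show False
    proof cases
      case 1
      then have "l = cyc_pred n i0"
        using orderings_nth_eq_iff[OF p i0 cyc_succ_less[OF l(1)]] cyc_succ_eq_iff[OF i0 l(1)] u_def
        by simp
      then show False
        using x l(2) u'_def by simp
    next
      case 2
      then have "i0 = cyc_pred n l"
        using orderings_nth_eq_iff[OF p i0 cyc_pred_less[OF l(1)]] u_def by simp
      then show False
        using l_succ cyc_succ_pred[OF l(1)] by simp
    qed
  qed
  then show ?thesis
    using ux by (simp add: u_def w_def)
qed

lemma cyc_adj_eq_if_edges_but_one: "cyc_adj n p = cyc_adj n q"
proof (intro ext iffI)
  have all_edges: "cyc_adj n q (p ! i) (p ! cyc_succ n i)" if "i < n" for i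
    using edges missing_edge_in_cyc_adj that by blast
  have p_in_q: "cyc_adj n q a b" if "cyc_adj n p a b" for a b
    using that all_edges unfolding cyc_adj_def by (metis insert_commute)
  fix a b
  show "cyc_adj n p a b \<Longrightarrow> cyc_adj n q a b"
    by (rule p_in_q)
  assume ab: "cyc_adj n q a b"
  have "{b. cyc_adj n p a b} = {b. cyc_adj n q a b}"
    using cyc_adj_nbrs_eq_if_subset[OF p q n] cyc_adj_less[OF q ab] p_in_q by blast
  then show "cyc_adj n p a b"
    using ab by blast
qed

end

section \<open>The number of chambers\<close>

definition normal_orderings :: "nat \<Rightarrow> nat list set" where
  "normal_orderings n = (\<lambda>t. 0 # t) ` {t \<in> permutations_of_set {1..<n}. hd t < last t}"

lemma normal_orderingsD:
  assumes q: "q \<in> normal_orderings n" and n: "3 \<le> n"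
  shows "q \<in> orderings n" "q ! 0 = 0" "q ! 1 < q ! (n - 1)"
proof -
  obtain t where t: "q = 0 # t" "distinct t" "set t = {1..<n}" "hd t < last t"
    using q unfolding normal_orderings_def permutations_of_set_def by blast
  have len: "length t = n - 1"
    using t(2,3) distinct_card[of t] by simp
  then have "t \<noteq> []"
    using n by auto
  show "q \<in> orderings n"
    using t n by (auto simp: orderings_def)
  show "q ! 0 = 0"
    using t(1) by simp
  have "q ! 1 = hd t" "q ! (n - 1) = last t"
    using t(1) len n \<open>t \<noteq> []\<close> by (simp_all add: hd_conv_nth last_conv_nth nth_Cons')
  then show "q ! 1 < q ! (n - 1)"
    using t(4) by simp
qed

lemma hd_neq_last: "distinct t \<Longrightarrow> 2 \<le> length t \<Longrightarrow> hd t \<noteq> last t"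
  by (cases t) (auto simp: last_in_set)

lemma card_normal_orderings:
  assumes n: "3 \<le> n"
  shows "card (normal_orderings n) = fact (n - 1) div 2"
proof -
  define P where "P = permutations_of_set {1..<n}"
  define T where "T = {t \<in> P. hd t < last t}"
  define T' where "T' = {t \<in> P. last t < hd t}"
  have lenP: "length t = n - 1" if "t \<in> P" for t
    using that distinct_card[of t] unfolding P_def permutations_of_set_def by auto
  have rev_mem: "rev t \<in> T' \<longleftrightarrow> t \<in> T" for t
    by (simp add: T_def T'_def P_def permutations_of_set_def hd_rev last_rev)
  have "rev ` T = T'"
  proof (intro equalityI subsetI)
    fix t
    assume "t \<in> T'"
    then show "t \<in> rev ` T"
      using rev_mem[of "rev t"] by (simp add: image_iff) (metis rev_rev_ident)
  qed (use rev_mem in auto)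
  then have card_T': "card T' = card T"
    using card_image[of rev T] by (simp add: inj_on_def)
  have "P = T \<union> T'"
  proof -
    have "hd t \<noteq> last t" if "t \<in> P" for t
      using hd_neq_last[of t] lenP[OF that] n that unfolding P_def permutations_of_set_def by auto
    then show ?thesis
      unfolding T_def T'_def by (auto simp: neq_iff)
  qed
  moreover have "T \<inter> T' = {}"
    unfolding T_def T'_def by auto
  moreover have "finite T" "finite T'"
    unfolding T_def T'_def P_def by simp_all
  ultimately have "card P = 2 * card T"
    using card_T' by (simp add: card_Un_disjoint)
  moreover have "card P = fact (n - 1)"
    unfolding P_def by simp
  moreover have "card (normal_orderings n) = card T"
    unfolding normal_orderings_def T_def P_def by (intro card_image) (simp add: inj_on_def)
  ultimately show ?thesis
    by simp
qed

text \<open>Every chamber is the chamber of a normal ordering: rotate the label 0 to the front and,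
  if necessary, reverse the remaining labels.\<close>
lemma ex_normal_ordering:
  assumes p: "p \<in> orderings n" and n: "3 \<le> n"
  shows "\<exists>q\<in>normal_orderings n. chamber_splits n q = chamber_splits n p"
proof -
  obtain k where k: "k < n" "p ! k = 0"
    using orderings_nth_surj[OF p, of 0] n by auto
  define q where "q = rotate k p"
  have qo: "q \<in> orderings n"
    using rotate_orderings[OF p] by (simp add: q_def)
  have sq: "chamber_splits n q = chamber_splits n p"
    using chamber_splits_rotate[OF p] n by (simp add: q_def)
  have "q ! 0 = 0"
    using k p by (simp add: q_def nth_rotate orderings_length)
  then obtain t where qt: "q = 0 # t"
    using orderings_length[OF qo] n by (cases q) auto
  have dt: "distinct t" "0 \<notin> set t" and st0: "insert 0 (set t) = {0..<n}"
    using qo qt by (simp_all add: orderings_def)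
  have "set t = {0..<n} - {0}"
    using st0 dt(2) by blast
  also have "\<dots> = {1..<n}"
    by auto
  finally have st: "set t = {1..<n}" .
  from dt st have tP: "t \<in> permutations_of_set {1..<n}" "rev t \<in> permutations_of_set {1..<n}"
    by (simp_all add: permutations_of_set_def)
  have "hd t \<noteq> last t"
    using hd_neq_last[OF dt(1)] orderings_length[OF qo] qt n by simp
  then consider "hd t < last t" | "last t < hd t"
    by linarith
  then show ?thesis
  proof cases
    case 1
    then have "q \<in> normal_orderings n"
      using tP qt unfolding normal_orderings_def by blast
    then show ?thesis
      using sq by blast
  next
    case 2
    have "0 # rev t = rotate (length t) (rev q)"
      using qt rotate_append[of "rev t" "[0]"] by simp
    then have "chamber_splits n (0 # rev t) = chamber_splits n q"
      using chamber_splits_rotate[OF rev_orderings[OF qo]] chamber_splits_rev[OF qo] n by simp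
    moreover have "0 # rev t \<in> normal_orderings n"
      using tP 2 unfolding normal_orderings_def by (auto simp: hd_rev last_rev)
    ultimately show ?thesis
      using sq by metis
  qed
qed

text \<open>A normal ordering is recovered from its cyclic adjacency by walking along it from 0,
  starting towards the smaller of the two neighbours of 0.\<close>
lemma normal_ordering_eq_if_cyc_adj_eq:
  assumes p: "p \<in> normal_orderings n" and q: "q \<in> normal_orderings n" and n: "3 \<le> n"
    and adj: "cyc_adj n p = cyc_adj n q"
  shows "p = q"
proof -
  note po = normal_orderingsD[OF p n] and qo = normal_orderingsD[OF q n]
  have nbrs: "{p ! cyc_succ n i, p ! cyc_pred n i} = {q ! cyc_succ n i, q ! cyc_pred n i}"
    if "i < n" "p ! i = q ! i" for i
    using cyc_adj_nbrs[OF po(1) that(1)] cyc_adj_nbrs[OF qo(1) that(1)] adj that(2) by simp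
  have walk: "p ! i = q ! i \<and> p ! (i + 1) = q ! (i + 1)" if "i + 1 < n" for i
    using that
  proof (induction i)
    case 0
    have "{p ! 1, p ! (n - 1)} = {q ! 1, q ! (n - 1)}"
      using nbrs[of 0] po(2) qo(2) n by (simp add: cyc_succ_def cyc_pred_def)
    then show ?case
      using po qo by (auto simp: doubleton_eq_iff)
  next
    case (Suc i)
    then have IH: "p ! i = q ! i" "p ! (i + 1) = q ! (i + 1)"
      by simp_all
    have "{p ! (i + 2), p ! i} = {q ! (i + 2), q ! i}"
      using nbrs[of "i + 1"] IH(2) Suc.prems by (simp add: cyc_succ_def cyc_pred_def)
    moreover have "p ! (i + 2) \<noteq> p ! i"
      using orderings_nth_eq_iff[OF po(1), of "i + 2" i] Suc.prems by simp
    ultimately have "p ! (i + 2) = q ! (i + 2)"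
      using IH by (auto simp: doubleton_eq_iff)
    then show ?case
      using IH by simp
  qed
  show ?thesis
  proof (rule nth_equalityI)
    show "length p = length q"
      using orderings_length po(1) qo(1) by simp
    fix i
    assume "i < length p"
    then have "i < n"
      using orderings_length[OF po(1)] by simp
    then show "p ! i = q ! i"
      using walk[of i] walk[of "i - 1"] n by (cases "i + 1 < n") auto
  qed
qed

lemma cyc_adj_eq_if_chamber_splits_eq:
  assumes "p \<in> orderings n" "q \<in> orderings n" "4 \<le> n" "chamber_splits n p = chamber_splits n q"
  shows "cyc_adj n p = cyc_adj n q"
  using assms pair_split_in_chamber_splits_iff[OF assms(1,3)] pair_split_in_chamber_splits_iff[OF assms(2,3)]
  by (intro ext) metis

lemma chamber_splits_eq_iff_cyc_adj_eq:
  assumes p: "p \<in> orderings n" and q: "q \<in> orderings n" and n: "4 \<le> n"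
  shows "chamber_splits n p = chamber_splits n q \<longleftrightarrow> cyc_adj n p = cyc_adj n q"
proof
  assume "chamber_splits n p = chamber_splits n q"
  then show "cyc_adj n p = cyc_adj n q"
    using cyc_adj_eq_if_chamber_splits_eq[OF p q n] by blast
next
  assume adj: "cyc_adj n p = cyc_adj n q"
  obtain p' where p': "p' \<in> normal_orderings n" "chamber_splits n p' = chamber_splits n p"
    using ex_normal_ordering[OF p] n by auto
  obtain q' where q': "q' \<in> normal_orderings n" "chamber_splits n q' = chamber_splits n q"
    using ex_normal_ordering[OF q] n by auto
  have "cyc_adj n p' = cyc_adj n q'"
    using cyc_adj_eq_if_chamber_splits_eq[OF normal_orderingsD(1)[OF p'(1)] p n p'(2)]
      cyc_adj_eq_if_chamber_splits_eq[OF normal_orderingsD(1)[OF q'(1)] q n q'(2)] adj n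
    by simp
  then show "chamber_splits n p = chamber_splits n q"
    using normal_ordering_eq_if_cyc_adj_eq[OF p'(1) q'(1)] n p' q' by simp
qed

lemma card_chamber_splits_image:
  assumes n: "4 \<le> n"
  shows "card (chamber_splits n ` orderings n) = fact (n - 1) div 2"
proof -
  have n3: "3 \<le> n"
    using n by simp
  have "chamber_splits n ` orderings n \<subseteq> chamber_splits n ` normal_orderings n"
  proof
    fix S
    assume "S \<in> chamber_splits n ` orderings n"
    then obtain p where "p \<in> orderings n" "S = chamber_splits n p"
      by blast
    then show "S \<in> chamber_splits n ` normal_orderings n"
      using ex_normal_ordering[OF _ n3] by (metis image_eqI)
  qed
  moreover have "chamber_splits n ` normal_orderings n \<subseteq> chamber_splits n ` orderings n"
    using normal_orderingsD(1)[OF _ n3] by blast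
  moreover have "inj_on (chamber_splits n) (normal_orderings n)"
  proof (rule inj_onI)
    fix p q
    assume pq: "p \<in> normal_orderings n" "q \<in> normal_orderings n"
      and eq: "chamber_splits n p = chamber_splits n q"
    have "cyc_adj n p = cyc_adj n q"
      using cyc_adj_eq_if_chamber_splits_eq[OF normal_orderingsD(1)[OF pq(1) n3]
          normal_orderingsD(1)[OF pq(2) n3] n eq] .
    then show "p = q"
      using normal_ordering_eq_if_cyc_adj_eq[OF pq n3] by simp
  qed
  ultimately show ?thesis
    using card_image card_normal_orderings[OF n3] by (metis subset_antisym)
qed

section \<open>The number of splits in a chamber\<close>

lemma set_take_drop_eq_image:
  assumes "r + m \<le> length p"
  shows "set (take m (drop r p)) = (!) p ` {r..<r + m}"
proof -
  have "set (take m (drop r p)) = (!) (drop r p) ` {0..<m}"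
    by (rule nth_image[symmetric]) (use assms in simp)
  also have "\<dots> = (\<lambda>i. p ! (i + r)) ` {0..<m}"
    using assms by (intro image_cong) (auto simp: add.commute)
  also have "\<dots> = (!) p ` ((\<lambda>i. i + r) ` {0..<m})"
    by (simp only: image_image)
  also have "\<dots> = (!) p ` {r..<r + m}"
    by (simp add: add.commute)
  finally show ?thesis .
qed

lemma nth_in_set_take: "k < m \<Longrightarrow> k < length xs \<Longrightarrow> xs ! k \<in> set (take m xs)"
  using nth_mem[of k "take m xs"] by simp

lemma arc_avoiding_first:
  assumes p: "p \<in> orderings n" and m: "0 < m" "m < n"
    and avoid: "p ! 0 \<notin> set (take m (rotate r p))"
  shows "1 \<le> r mod n" "r mod n + m \<le> n" "set (take m (rotate r p)) = set (take m (drop (r mod n) p))"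
proof -
  have len: "length p = n"
    using p by (simp add: orderings_length)
  have at: "rotate r p ! k = p ! ((k + r mod n) mod n)" if "k < n" for k
    using that len by (simp add: nth_rotate mod_add_right_eq add.commute)
  show "1 \<le> r mod n"
  proof (rule ccontr)
    assume "\<not> 1 \<le> r mod n"
    then have "r mod n = 0"
      by simp
    then have "rotate r p ! 0 = p ! 0"
      using at[of 0] m by simp
    then show False
      using avoid nth_in_set_take[of 0 m "rotate r p"] m len by simp
  qed
  show r_m: "r mod n + m \<le> n"
  proof (rule ccontr)
    assume "\<not> r mod n + m \<le> n"
    then have "n - r mod n < m" "n - r mod n < n"
      using \<open>1 \<le> r mod n\<close> m by linarith+
    moreover have "rotate r p ! (n - r mod n) = p ! 0"
      using at[of "n - r mod n"] calculation m by simp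
    ultimately show False
      using avoid nth_in_set_take[of "n - r mod n" m "rotate r p"] len by simp
  qed
  have "rotate r p = drop (r mod n) p @ take (r mod n) p"
    using len by (simp add: rotate_drop_take)
  then show "set (take m (rotate r p)) = set (take m (drop (r mod n) p))"
    using r_m len by simp
qed

lemma nontriv_split_sides:
  assumes "split_of n B \<in> nontriv_splits n" "B \<subseteq> {0..<n}"
  shows "2 \<le> card B" "2 \<le> card ({0..<n} - B)"
proof -
  obtain A where "split_of n B = {A, {0..<n} - A}" "A \<subseteq> {0..<n}" "2 \<le> card A" "2 \<le> card ({0..<n} - A)"
    using assms(1) unfolding nontriv_splits_def by blast
  then have A: "split_of n B = split_of n A" "A \<subseteq> {0..<n}" "2 \<le> card A" "2 \<le> card ({0..<n} - A)"
    by (simp_all add: split_of_def)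
  from split_of_eq_cases[OF A(1)] consider "B = A" | "B = {0..<n} - A"
    by blast
  then have "2 \<le> card B \<and> 2 \<le> card ({0..<n} - B)"
  proof cases
    case 2
    then have "{0..<n} - B = A"
      using A(2) by (simp add: double_diff)
    then show ?thesis
      using 2 A(3,4) by simp
  qed (use A in simp)
  then show "2 \<le> card B" "2 \<le> card ({0..<n} - B)"
    by simp_all
qed

text \<open>A nontrivial circular split is indexed by its part avoiding p ! 0, which is a block of
  m positions starting at some position r \<ge> 1.\<close>
lemma chamber_splits_eq_blocks:
  assumes p: "p \<in> orderings n"
  shows "chamber_splits n p
    = (\<lambda>(m, r). split_of n (set (take m (drop r p)))) ` (SIGMA m:{2..n - 2}. {1..n - m})"
proof (intro equalityI subsetI)
  fix s
  assume s: "s \<in> chamber_splits n p"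
  then have "s \<in> circ_splits n p"
    by (simp add: chamber_splits_def)
  then obtain r m where m: "0 < m" "m < n" and s_A: "s = split_of n (set (take m (rotate r p)))"
    by (rule circ_splitsE)
  define A where "A = set (take m (rotate r p))"
  have "\<exists>m' r'. 0 < m' \<and> m' < n \<and> s = split_of n (set (take m' (rotate r' p)))
      \<and> p ! 0 \<notin> set (take m' (rotate r' p))"
  proof (cases "p ! 0 \<in> A")
    case True
    have compl: "{0..<n} - A = set (take (n - m) (rotate (r + m) p))"
      using compl_arc[OF p, of m r] m by (simp add: A_def)
    have "s = split_of n ({0..<n} - A)"
      using s_A split_of_compl[OF arc_subset[OF p, of m r]] by (simp add: A_def)
    then have "s = split_of n (set (take (n - m) (rotate (r + m) p)))"
      by (simp only: compl)
    moreover have "p ! 0 \<notin> set (take (n - m) (rotate (r + m) p))"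
      using True by (simp flip: compl)
    moreover have "0 < n - m" "n - m < n"
      using m by simp_all
    ultimately show ?thesis
      by blast
  qed (use m s_A A_def in blast)
  then obtain m' r' where B: "0 < m'" "m' < n" "s = split_of n (set (take m' (rotate r' p)))"
      "p ! 0 \<notin> set (take m' (rotate r' p))"
    by blast
  note block = arc_avoiding_first[OF p B(1,2,4)]
  have "2 \<le> m'" "2 \<le> n - m'"
    using nontriv_split_sides[of n "set (take m' (rotate r' p))"] s B(3) arc_subset[OF p]
      card_arc[OF p, of m'] card_Diff_subset[OF finite_set arc_subset[OF p]] B(2)
    by (auto simp: chamber_splits_def)
  then have "(m', r' mod n) \<in> (SIGMA m:{2..n - 2}. {1..n - m})"
    using block by auto
  then show "s \<in> (\<lambda>(m, r). split_of n (set (take m (drop r p)))) ` (SIGMA m:{2..n - 2}. {1..n - m})"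
    using B(3) block(3) by force
next
  fix s
  assume "s \<in> (\<lambda>(m, r). split_of n (set (take m (drop r p)))) ` (SIGMA m:{2..n - 2}. {1..n - m})"
  then obtain m r where mr: "2 \<le> m" "m \<le> n - 2" "1 \<le> r" "r \<le> n - m"
      "s = split_of n (set (take m (drop r p)))"
    by auto
  have "rotate r p = drop r p @ take r p"
    using mr p by (simp add: rotate_drop_take orderings_length)
  then have arc: "set (take m (drop r p)) = set (take m (rotate r p))"
    using mr p by (simp add: orderings_length)
  have "card ({0..<n} - set (take m (rotate r p))) = n - m"
    using card_arc[OF p, of m r] arc_subset[OF p] mr by (simp add: card_Diff_subset)
  then have "s \<in> nontriv_splits n"
    using split_of_in_nontriv_splits[OF arc_subset[OF p]] card_arc[OF p, of m r] mr arc by simp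
  moreover have "s \<in> circ_splits n p"
    using split_of_arc_in_circ_splits[of m n r p] mr arc by simp
  ultimately show "s \<in> chamber_splits n p"
    by (simp add: chamber_splits_def)
qed

lemma inj_on_blocks:
  assumes p: "p \<in> orderings n"
  shows "inj_on (\<lambda>(m, r). split_of n (set (take m (drop r p)))) (SIGMA m:{2..n - 2}. {1..n - m})"
proof (rule inj_onI, clarsimp)
  fix m r m' r'
  assume mr: "2 \<le> m" "m \<le> n - 2" "Suc 0 \<le> r" "r \<le> n - m"
    and mr': "2 \<le> m'" "m' \<le> n - 2" "Suc 0 \<le> r'" "r' \<le> n - m'"
    and eq: "split_of n (set (take m (drop r p))) = split_of n (set (take m' (drop r' p)))"
  have len: "length p = n"
    using p by (simp add: orderings_length)
  have inj: "inj_on ((!) p) {0..<n}"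
    using inj_on_nth[of p "{0..<n}"] p len by (simp add: orderings_distinct)
  have block: "set (take m (drop r p)) = (!) p ` {r..<r + m}"
    "set (take m' (drop r' p)) = (!) p ` {r'..<r' + m'}"
    using set_take_drop_eq_image[of r m p] set_take_drop_eq_image[of r' m' p] len mr mr'
    by simp_all
  have "p ! 0 \<notin> (!) p ` {r..<r + m}" "p ! 0 \<notin> (!) p ` {r'..<r' + m'}"
    using inj mr mr' unfolding inj_on_def by fastforce+
  then have "(!) p ` {r..<r + m} = (!) p ` {r'..<r' + m'}"
    using split_of_eq_imp_eq[of n _ _ "p ! 0"] eq block orderings_nth_less[OF p, of 0] mr by auto
  then have "{r..<r + m} = {r'..<r' + m'}"
    using inj_on_image_eq_iff[OF inj] mr mr' by auto
  then show "m = m' \<and> r = r'"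
    using atLeastLessThan_inj[of r "r + m" r' "r' + m'"] mr mr' by auto
qed

lemma double_sum_atLeast2: "2 * (\<Sum>i\<in>{2..k + 2}. i) = (k + 4) * (k + 1 :: nat)"
proof (induction k)
  case (Suc k)
  have "{2..Suc k + 2} = insert (Suc (k + 2)) {2..k + 2}"
    by auto
  then show ?case
    using Suc by (simp add: algebra_simps)
qed simp

lemma double_sum_diff_interval:
  assumes "4 \<le> (n::nat)"
  shows "2 * (\<Sum>m\<in>{2..n - 2}. n - m) = n * (n - 3)"
proof -
  obtain k where n: "n = k + 4"
    using assms by (metis add.commute le_add_diff_inverse)
  have "(\<Sum>m\<in>{2..k + 2}. k + 4 - m) = (\<Sum>i\<in>{2..k + 2}. i)"
    by (rule sum.reindex_bij_witness[where i = "\<lambda>i. k + 4 - i" and j = "\<lambda>i. k + 4 - i"]) auto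
  then show ?thesis
    using double_sum_atLeast2[of k] n by simp
qed

lemma card_chamber_splits:
  assumes "p \<in> orderings n" "4 \<le> n"
  shows "card (chamber_splits n p) = n * (n - 3) div 2"
proof -
  have "card (chamber_splits n p) = card (SIGMA m:{2..n - 2}. {1..n - m})"
    using chamber_splits_eq_blocks[OF assms(1)] inj_on_blocks[OF assms(1)] by (simp add: card_image)
  also have "\<dots> = (\<Sum>m\<in>{2..n - 2}. n - m)"
    by (simp add: card_SigmaI)
  finally show ?thesis
    using double_sum_diff_interval[OF assms(2)] by simp
qed

section \<open>Ridges and pairs of splits\<close>

lemma edge_split_in_chamber_splits:
  assumes p: "p \<in> orderings n" and n: "4 \<le> n" and i: "i < n"
  shows "split_of n {p ! i, p ! cyc_succ n i} \<in> chamber_splits n p"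
  using pair_split_in_chamber_splits_iff[OF p n] i unfolding cyc_adj_def by blast

lemma edge_split_inj:
  assumes p: "p \<in> orderings n" and n: "5 \<le> n" and i: "i < n" and j: "j < n"
    and eq: "split_of n {p ! i, p ! cyc_succ n i} = split_of n {p ! j, p ! cyc_succ n j}"
  shows "i = j"
proof -
  have card_edge: "card {p ! k, p ! cyc_succ n k} = 2" if "k < n" for k
    using that orderings_nth_eq_iff[OF p that cyc_succ_less[OF that]] cyc_succ_neq[OF that] n by simp
  have "{p ! j, p ! cyc_succ n j} \<subseteq> {0..<n}"
    using orderings_nth_less[OF p] j cyc_succ_less[OF j] by simp
  then have card_compl: "card ({0..<n} - {p ! j, p ! cyc_succ n j}) = n - 2"
    using card_edge[OF j] by (simp add: card_Diff_subset)
  have "{p ! i, p ! cyc_succ n i} \<noteq> {0..<n} - {p ! j, p ! cyc_succ n j}"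
  proof
    assume "{p ! i, p ! cyc_succ n i} = {0..<n} - {p ! j, p ! cyc_succ n j}"
    then have "2 = n - 2"
      using card_edge[OF i] card_compl by simp
    then show False
      using n by simp
  qed
  then have "{p ! i, p ! cyc_succ n i} = {p ! j, p ! cyc_succ n j}"
    using split_of_eq_cases[OF eq] by blast
  then consider "p ! i = p ! j" | "p ! i = p ! cyc_succ n j" "p ! cyc_succ n i = p ! j"
    by (auto simp: doubleton_eq_iff)
  then show "i = j"
  proof cases
    case 2
    then have "i = cyc_succ n j" "cyc_succ n i = j"
      using orderings_nth_eq_iff[OF p] i j cyc_succ_less by auto
    then show ?thesis
      using cyc_succ_succ_neq[OF j] n by simp
  qed (use orderings_nth_eq_iff[OF p i j] in simp)
qed

text \<open>Two chambers sharing a ridge coincide: all but at most one edge split of the first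
  ordering lie in the ridge, so all but one of its adjacencies are adjacencies of the second
  ordering, which then has the same cyclic adjacency.\<close>
lemma chamber_splits_eq_if_common_ridge:
  assumes p: "p \<in> orderings n" and q: "q \<in> orderings n" and n: "5 \<le> n"
    and V: "V \<subseteq> chamber_splits n p" "V \<subseteq> chamber_splits n q"
    and card_V: "card V + 1 = card (chamber_splits n p)"
  shows "chamber_splits n p = chamber_splits n q"
proof -
  define E where "E i = split_of n {p ! i, p ! cyc_succ n i}" for i
  have "card (chamber_splits n p - V) = 1"
    using card_Diff_subset[OF finite_subset[OF V(1) finite_chamber_splits] V(1)] card_V by simp
  then obtain s0 where s0: "chamber_splits n p - V = {s0}"
    by (auto simp: card_1_singleton_iff)
  have outside_unique: "i = j" if "i < n" "j < n" "E i \<notin> V" "E j \<notin> V" for i j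
  proof -
    have "E i \<in> chamber_splits n p - V" "E j \<in> chamber_splits n p - V"
      using that edge_split_in_chamber_splits[OF p] n by (simp_all add: E_def)
    then have "E i = E j"
      using s0 by blast
    then show ?thesis
      using edge_split_inj[OF p n that(1,2)] by (simp add: E_def)
  qed
  have "\<exists>i0. \<forall>i<n. i \<noteq> i0 \<longrightarrow> E i \<in> V"
  proof (cases "\<exists>i<n. E i \<notin> V")
    case True
    then obtain i0 where "i0 < n" "E i0 \<notin> V"
      by blast
    then show ?thesis
      using outside_unique by blast
  qed blast
  then obtain i0 where i0: "\<And>i. i < n \<Longrightarrow> i \<noteq> i0 \<Longrightarrow> E i \<in> V"
    by blast
  have "cyc_adj n q (p ! i) (p ! cyc_succ n i)" if "i < n" "i \<noteq> i0" for i
  proof -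
    have "E i \<in> chamber_splits n q"
      using i0[OF that] V(2) by blast
    moreover have "p ! i \<noteq> p ! cyc_succ n i"
      using orderings_nth_eq_iff[OF p that(1) cyc_succ_less[OF that(1)]] cyc_succ_neq[OF that(1)] n
      by simp
    ultimately show ?thesis
      using pair_split_in_chamber_splits_iff[OF q, of "p ! i" "p ! cyc_succ n i"] n
      unfolding E_def by simp
  qed
  moreover have "3 \<le> n"
    using n by simp
  ultimately have "cyc_adj n p = cyc_adj n q"
    using cyc_adj_eq_if_edges_but_one[OF p q] by blast
  then show ?thesis
    using chamber_splits_eq_iff_cyc_adj_eq[OF p q] n by simp
qed

text \<open>Two splits A|X-A and B|X-B are both circular for the ordering listing A \<inter> B, A - B,
  X - (A \<union> B) and B - A in turn.\<close>
lemma ex_ordering_with_two_splits: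
  assumes s1: "s1 \<in> nontriv_splits n" and s2: "s2 \<in> nontriv_splits n"
  shows "\<exists>p\<in>orderings n. s1 \<in> chamber_splits n p \<and> s2 \<in> chamber_splits n p"
proof -
  define X where "X = {0..<n}"
  obtain A where A: "s1 = split_of n A" "A \<subseteq> X" "2 \<le> card A" "2 \<le> card (X - A)"
    using s1 unfolding nontriv_splits_def split_of_def X_def by blast
  obtain B where B: "s2 = split_of n B" "B \<subseteq> X" "2 \<le> card B" "2 \<le> card (X - B)"
    using s2 unfolding nontriv_splits_def split_of_def X_def by blast
  have fin: "finite X" "finite A" "finite B"
    using A(2) B(2) finite_subset by (auto simp: X_def)
  define L1 L2 L3 L4 where "L1 = sorted_list_of_set (A \<inter> B)" and "L2 = sorted_list_of_set (A - B)"
    and "L3 = sorted_list_of_set (X - (A \<union> B))" and "L4 = sorted_list_of_set (B - A)"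
  have L: "set L1 = A \<inter> B" "set L2 = A - B" "set L3 = X - (A \<union> B)" "set L4 = B - A"
    "distinct L1" "distinct L2" "distinct L3" "distinct L4"
    using fin unfolding L1_def L2_def L3_def L4_def by auto
  define p where "p = L1 @ L2 @ L3 @ L4"
  have p: "p \<in> orderings n"
    using L A(2) B(2) by (auto simp: p_def orderings_def X_def)
  have card_less: "0 < card C" "card C < n" if "C \<subseteq> X" "2 \<le> card C" "2 \<le> card (X - C)" for C
    using that card_Diff_subset[OF finite_subset[OF that(1) fin(1)] that(1)] by (auto simp: X_def)
  have "set (L1 @ L2) = A" "distinct (L1 @ L2)"
    using L by auto
  then have "length (L1 @ L2) = card A"
    using distinct_card by metis
  then have "set (take (card A) (rotate 0 p)) = A"
    using L by (auto simp: p_def)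
  then have "s1 \<in> circ_splits n p"
    using split_of_arc_in_circ_splits[OF card_less[OF A(2-4)], of 0 p] A(1) by simp
  moreover have "set (L4 @ L1) = B" "distinct (L4 @ L1)"
    using L by auto
  then have "length (L4 @ L1) = card B"
    using distinct_card by metis
  then have "set (take (card B) (rotate (length (L1 @ L2 @ L3)) p)) = B"
    using L rotate_append[of "L1 @ L2 @ L3" L4] by (auto simp: p_def)
  then have "s2 \<in> circ_splits n p"
    using split_of_arc_in_circ_splits[OF card_less[OF B(2-4)], of "length (L1 @ L2 @ L3)" p] B(1)
    by simp
  ultimately show ?thesis
    using p s1 s2 by (auto simp: chamber_splits_def)
qed

section \<open>Faces of the network space\<close>

lemma std_simplex_eq_restrict:
  assumes "finite N" "U \<subseteq> N"
  shows "{x. (\<forall>s. 0 \<le> x s) \<and> (\<forall>s. x s \<noteq> 0 \<longrightarrow> s \<in> U) \<and> (\<Sum>s\<in>N. x s) = 1} = std_simplex U"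
proof -
  have sum_eq: "(\<Sum>s\<in>N. x s) = (\<Sum>s\<in>U. x s)" if "\<forall>s. x s \<noteq> 0 \<longrightarrow> s \<in> U" for x :: "'a \<Rightarrow> real"
    using that by (intro sum.mono_neutral_right[OF assms]) auto
  show ?thesis
    unfolding std_simplex_def
  proof (rule Collect_cong)
    fix x :: "'a \<Rightarrow> real"
    show "((\<forall>s. 0 \<le> x s) \<and> (\<forall>s. x s \<noteq> 0 \<longrightarrow> s \<in> U) \<and> (\<Sum>s\<in>N. x s) = 1) \<longleftrightarrow>
        ((\<forall>s. 0 \<le> x s) \<and> (\<forall>s. x s \<noteq> 0 \<longrightarrow> s \<in> U) \<and> (\<Sum>s\<in>U. x s) = 1)"
      using sum_eq[of x] by auto
  qed
qed

lemma face_of_chamber_eq_std_simplex: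
  "{x \<in> chamber n p. \<forall>s. x s \<noteq> 0 \<longrightarrow> s \<in> T} = std_simplex (chamber_splits n p \<inter> T)"
proof -
  have "{x \<in> chamber n p. \<forall>s. x s \<noteq> 0 \<longrightarrow> s \<in> T} =
      {x. (\<forall>s. 0 \<le> x s) \<and> (\<forall>s. x s \<noteq> 0 \<longrightarrow> s \<in> chamber_splits n p \<inter> T)
        \<and> (\<Sum>s\<in>nontriv_splits n. x s) = 1}"
    unfolding chamber_def chamber_splits_def by blast
  also have "\<dots> = std_simplex (chamber_splits n p \<inter> T)"
    by (rule std_simplex_eq_restrict[OF finite_nontriv_splits]) (auto simp: chamber_splits_def)
  finally show ?thesis .
qed

lemma chamber_eq_std_simplex: "chamber n p = std_simplex (chamber_splits n p)"
  using face_of_chamber_eq_std_simplex[of n p UNIV] by simp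

definition chamber_faces :: "nat \<Rightarrow> nat \<Rightarrow> nat set set set set" where
  "chamber_faces n k = {V. card V = k \<and> (\<exists>p\<in>orderings n. V \<subseteq> chamber_splits n p)}"

lemma simplices_of_dim_eq:
  "{F \<in> simplices n. is_simplex k F} = std_simplex ` chamber_faces n (Suc k)"
proof (intro equalityI subsetI)
  fix F
  assume F: "F \<in> {F \<in> simplices n. is_simplex k F}"
  then obtain p T where "p \<in> orderings n" "F = std_simplex (chamber_splits n p \<inter> T)"
    unfolding simplices_def using face_of_chamber_eq_std_simplex by blast
  moreover have "card (chamber_splits n p \<inter> T) = Suc k"
    using F calculation is_simplex_std_simplex_iff[of "chamber_splits n p \<inter> T"]
    by (simp add: finite_chamber_splits)
  ultimately show "F \<in> std_simplex ` chamber_faces n (Suc k)"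
    unfolding chamber_faces_def by blast
next
  fix F
  assume "F \<in> std_simplex ` chamber_faces n (Suc k)"
  then obtain V p where V: "F = std_simplex V" "card V = Suc k" "p \<in> orderings n"
      "V \<subseteq> chamber_splits n p"
    unfolding chamber_faces_def by blast
  then have "F = {x \<in> chamber n p. \<forall>s. x s \<noteq> 0 \<longrightarrow> s \<in> V}"
    using face_of_chamber_eq_std_simplex[of n p V] by (simp add: Int_absorb1)
  then have "F \<in> simplices n"
    using V(3) unfolding simplices_def by blast
  moreover have "is_simplex k F"
    using V finite_subset[OF V(4) finite_chamber_splits] is_simplex_std_simplex by simp
  ultimately show "F \<in> {F \<in> simplices n. is_simplex k F}"
    by simp
qed

lemma card_simplices_of_dim:
  "card {F \<in> simplices n. is_simplex k F} = card (chamber_faces n (Suc k))"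
proof -
  have "finite V" if "V \<in> chamber_faces n (Suc k)" for V
    using that finite_subset[OF _ finite_chamber_splits] unfolding chamber_faces_def by blast
  then have "inj_on std_simplex (chamber_faces n (Suc k))"
    using std_simplex_inject by (intro inj_onI) blast
  then show ?thesis
    by (simp add: simplices_of_dim_eq card_image)
qed

lemma card_subsets_of_members:
  assumes fin: "finite \<S>" and card_S: "\<And>S. S \<in> \<S> \<Longrightarrow> finite S \<and> card S = Suc m"
    and common: "\<And>S T V. S \<in> \<S> \<Longrightarrow> T \<in> \<S> \<Longrightarrow> V \<subseteq> S \<Longrightarrow> V \<subseteq> T \<Longrightarrow> card V = m \<Longrightarrow> S = T"
  shows "card {V. card V = m \<and> (\<exists>S\<in>\<S>. V \<subseteq> S)} = card \<S> * Suc m"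
proof -
  have "{V. card V = m \<and> (\<exists>S\<in>\<S>. V \<subseteq> S)} = (\<Union>S\<in>\<S>. {V. V \<subseteq> S \<and> card V = m})"
    by blast
  also have "card \<dots> = (\<Sum>S\<in>\<S>. card {V. V \<subseteq> S \<and> card V = m})"
    using fin card_S common by (intro card_UN_disjoint) (auto simp: finite_subset)
  also have "\<dots> = (\<Sum>S\<in>\<S>. Suc m)"
    using card_S by (simp add: n_subsets)
  finally show ?thesis
    by simp
qed

lemma card_chambers:
  assumes "4 \<le> n"
  shows "card (chambers n) = fact (n - 1) div 2"
proof -
  have "chambers n = std_simplex ` chamber_splits n ` orderings n"
    unfolding chambers_def by (auto simp: chamber_eq_std_simplex)
  moreover have "inj_on std_simplex (chamber_splits n ` orderings n)"
    using std_simplex_inject finite_chamber_splits by (intro inj_onI) blast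
  ultimately show ?thesis
    using card_chamber_splits_image[OF assms] by (simp add: card_image)
qed

lemma chamber_is_simplex:
  assumes "p \<in> orderings n" "4 \<le> n"
  shows "is_simplex (n * (n - 3) div 2 - 1) (chamber n p)"
proof -
  have "4 * 1 \<le> n * (n - 3)"
    using assms(2) by (intro mult_le_mono) simp_all
  then have "2 \<le> n * (n - 3) div 2"
    using div_le_mono[of 4 "n * (n - 3)" 2] by simp
  then show ?thesis
    using card_chamber_splits[OF assms] is_simplex_std_simplex[OF finite_chamber_splits]
    by (simp add: chamber_eq_std_simplex)
qed

lemma five_le_card_chamber_splits: "5 \<le> (n::nat) \<Longrightarrow> 5 \<le> n * (n - 3) div 2"
proof -
  assume "5 \<le> n"
  then have "5 * 2 \<le> n * (n - 3)"
    by (intro mult_le_mono) simp_all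
  then show ?thesis
    using div_le_mono[of 10 "n * (n - 3)" 2] by simp
qed

lemma card_ridge_faces:
  assumes n: "5 \<le> n"
  shows "card (chamber_faces n (n * (n - 3) div 2 - 1)) = fact (n - 1) div 2 * (n * (n - 3) div 2)"
proof -
  define m where "m = n * (n - 3) div 2 - 1"
  have Suc_m: "Suc m = n * (n - 3) div 2"
    using five_le_card_chamber_splits[OF n] by (simp add: m_def)
  define \<S> where "\<S> = chamber_splits n ` orderings n"
  have faces: "chamber_faces n m = {V. card V = m \<and> (\<exists>S\<in>\<S>. V \<subseteq> S)}"
    unfolding chamber_faces_def \<S>_def by blast
  have fin: "finite \<S>"
    unfolding \<S>_def chamber_splits_def
    by (rule finite_subset[of _ "Pow (nontriv_splits n)"]) (auto simp: finite_nontriv_splits)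
  have card_S: "finite S \<and> card S = Suc m" if "S \<in> \<S>" for S
    using that card_chamber_splits n finite_chamber_splits Suc_m by (auto simp: \<S>_def)
  have common: "S = T"
    if ST: "S \<in> \<S>" "T \<in> \<S>" and V: "V \<subseteq> S" "V \<subseteq> T" "card V = m" for S T V
  proof -
    obtain p q where pq: "p \<in> orderings n" "q \<in> orderings n" "S = chamber_splits n p" "T = chamber_splits n q"
      using ST by (auto simp: \<S>_def)
    have "card V + 1 = card (chamber_splits n p)"
      using card_chamber_splits[OF pq(1)] n Suc_m V(3) by simp
    then show ?thesis
      using chamber_splits_eq_if_common_ridge[OF pq(1,2) n] V(1,2) pq(3,4) by simp
  qed
  have "card (chamber_faces n m) = card \<S> * Suc m"
    unfolding faces by (rule card_subsets_of_members[OF fin card_S common])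
  then show ?thesis
    using card_chamber_splits_image n Suc_m by (simp add: m_def \<S>_def)
qed

lemma chamber_faces_of_card_le_2:
  assumes "0 < k" "k \<le> 2"
  shows "chamber_faces n k = {V. V \<subseteq> nontriv_splits n \<and> card V = k}"
proof (intro equalityI subsetI)
  fix V
  assume "V \<in> chamber_faces n k"
  then show "V \<in> {V. V \<subseteq> nontriv_splits n \<and> card V = k}"
    unfolding chamber_faces_def chamber_splits_def by blast
next
  fix V
  assume V: "V \<in> {V. V \<subseteq> nontriv_splits n \<and> card V = k}"
  then have "card V = 1 \<or> card V = 2"
    using assms by auto
  then obtain s1 s2 where "V = {s1, s2}"
  proof (elim disjE)
    assume "card V = 1"
    then obtain s where "V = {s}"
      by (auto simp: card_1_singleton_iff)
    then show thesis
      using that[of s s] by simp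
  next
    assume "card V = 2"
    then obtain s1 s2 where "V = {s1, s2}"
      by (auto simp: card_2_iff)
    then show thesis
      by (rule that)
  qed
  moreover have "s1 \<in> nontriv_splits n" "s2 \<in> nontriv_splits n"
    using V calculation by auto
  then obtain p where "p \<in> orderings n" "s1 \<in> chamber_splits n p" "s2 \<in> chamber_splits n p"
    using ex_ordering_with_two_splits by blast
  ultimately show "V \<in> chamber_faces n k"
    using V unfolding chamber_faces_def by auto
qed

lemma card_chamber_faces_of_card_le_2:
  assumes "3 \<le> n" "0 < k" "k \<le> 2"
  shows "card (chamber_faces n k) = delta n choose k"
  using chamber_faces_of_card_le_2[OF assms(2,3)] n_subsets[OF finite_nontriv_splits]
    card_nontriv_splits[OF assms(1)]
  by simp

theorem theorem7:
  fixes n :: nat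
  assumes "n > 4"
  defines "c \<equiv> fact (n - 1) div 2"
      and "d \<equiv> n * (n - 3) div 2 - 1"
  shows "card (chambers n) = c
       \<and> (\<forall>C\<in>chambers n. is_simplex d C)
       \<and> card {F \<in> simplices n. is_simplex (d - 1) F} = c * (d + 1)
       \<and> card {F \<in> simplices n. is_simplex 0 F} = delta n
       \<and> card {F \<in> simplices n. is_simplex 1 F} = delta n choose 2"
proof -
  have n: "5 \<le> n" "4 \<le> n" "3 \<le> n"
    using assms(1) by simp_all
  have d: "Suc (d - 1) = d" "d + 1 = n * (n - 3) div 2"
    using five_le_card_chamber_splits[OF n(1)] by (simp_all add: d_def)
  have "card (chambers n) = c"
    using card_chambers[OF n(2)] by (simp add: c_def)
  moreover have "\<forall>C\<in>chambers n. is_simplex d C"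
    using chamber_is_simplex[OF _ n(2)] by (auto simp: chambers_def d_def)
  moreover have "card {F \<in> simplices n. is_simplex (d - 1) F} = c * (d + 1)"
    using card_simplices_of_dim[of n "d - 1"] card_ridge_faces[OF n(1)] d by (simp add: c_def d_def)
  moreover have "card {F \<in> simplices n. is_simplex 0 F} = delta n"
    using card_simplices_of_dim[of n 0] card_chamber_faces_of_card_le_2[OF n(3), of 1] by simp
  moreover have "card {F \<in> simplices n. is_simplex 1 F} = delta n choose 2"
    using card_simplices_of_dim[of n 1] card_chamber_faces_of_card_le_2[OF n(3), of 2]
    by (simp add: numeral_2_eq_2)
  ultimately show ?thesis
    by blast
qed

end
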